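(* In the setting below, suppose $p,q\geq5$. Then for all distinct $i,j,k\in\mathbb Z/N\mathbb Z$ we have $P_{ij}\cap Q_{jk}=\emptyset$.
   Context: Setting: $p,q$ distinct primes, $N=p+q$; $M=(m_{ik})_{i,k\in\mathbb Z/N\mathbb Z}$ has entries in $\mathbb Z/pq\mathbb Z$ and $(e^{2\pi i\,m_{ik}/pq})$ is a complex Hadamard matrix (unimodular entries, orthogonal rows). $L_i(k)=m_{ik}$, $L_{ij}=L_j-L_i$. For $d\mid pq$, $d(\mathbb Z/pq\mathbb Z)$ is the subgroup of multiples of $d$. For distinct $i,j$ there is a partition $\mathbb Z/N\mathbb Z=P_{ij}\sqcup Q_{ij}\sqcup R_{ij}$ and $r\in\mathbb Z/pq\mathbb Z$ with: $\#R_{ij}=2$ and $L_{ij}\equiv r$ on $R_{ij}$; $\#P_{ij}=p-1$ and $L_{ij}(P_{ij})=(r+q(\mathbb Z/pq\mathbb Z))\setminus\{r\}$; $\#Q_{ij}=q-1$ and $L_{ij}(Q_{ij})=(r+p(\mathbb Z/pq\mathbb Z))\setminus\{r\}$. This partition is unique ($R_{ij}$ is the pair of indices where $L_{ij}$ takes its unique repeated value). Put $P^+_{ij}=P_{ij}\cup R_{ij}$, $Q^+_{ij}=Q_{ij}\cup R_{ij}$. *)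

theory Defs
  imports Complex_Main "HOL-Computational_Algebra.Primes"
begin

text \<open>Indices of Z/NZ are represented by naturals in {0..<N}; entries of Z/pqZ by
integers, read modulo n = p*q.\<close>

definition Ldiff :: "nat \<Rightarrow> (nat \<Rightarrow> nat \<Rightarrow> int) \<Rightarrow> nat \<Rightarrow> nat \<Rightarrow> nat \<Rightarrow> int" where
  "Ldiff n m i j k = (m j k - m i k) mod int n"

text \<open>(exp(2 pi i m_ik / n))_{i,k<N} is a complex Hadamard matrix: unimodular entries
(automatic) and pairwise orthogonal rows.\<close>
definition exp_hadamard :: "nat \<Rightarrow> nat \<Rightarrow> (nat \<Rightarrow> nat \<Rightarrow> int) \<Rightarrow> bool" where
  "exp_hadamard N n m \<longleftrightarrow>
     (\<forall>i<N. \<forall>i'<N. i \<noteq> i' \<longrightarrow>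
        (\<Sum>k<N. exp (2 * pi * \<i> * of_int (m i k) / of_nat n)
               * cnj (exp (2 * pi * \<i> * of_int (m i' k) / of_nat n))) = 0)"

definition coset_mod :: "nat \<Rightarrow> nat \<Rightarrow> int \<Rightarrow> int set" where
  "coset_mod n d r = {x. 0 \<le> x \<and> x < int n \<and> x mod int d = r mod int d}"

definition is_PQR_partition ::
  "nat \<Rightarrow> nat \<Rightarrow> (nat \<Rightarrow> nat \<Rightarrow> int) \<Rightarrow> nat \<Rightarrow> nat
   \<Rightarrow> nat set \<Rightarrow> nat set \<Rightarrow> nat set \<Rightarrow> int \<Rightarrow> bool" where
  "is_PQR_partition p q m i j P Q R r \<longleftrightarrow>
     P \<union> Q \<union> R = {0..<p+q} \<and> P \<inter> Q = {} \<and> P \<inter> R = {} \<and> Q \<inter> R = {} \<and>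
     0 \<le> r \<and> r < int (p*q) \<and>
     card R = 2 \<and> (\<forall>k\<in>R. Ldiff (p*q) m i j k = r) \<and>
     card P = p - 1 \<and> Ldiff (p*q) m i j ` P = coset_mod (p*q) q r - {r} \<and>
     card Q = q - 1 \<and> Ldiff (p*q) m i j ` Q = coset_mod (p*q) p r - {r}"

end

theory Submission
  imports Defs "HOL-Number_Theory.Cong"
begin

text \<open>
  The values of L_ij on P_ij run through the coset r + q(Z/pqZ) except r, and the whole coset sums
  to 0 modulo p because p is odd; on Q_ij and R_ij, L_ij is congruent to r modulo p. Hence the sum
  of L_ij over all columns is congruent to -r + (q - 1) r + 2 r = q r_ij modulo p, and
  symmetrically to p r_ij modulo q. Since L_ik = L_ij + L_jk, cancelling q resp. p gives
  r_ik = r_ij + r_jk in Z/pqZ. At a column x in P_ij and Q_jk, L_ij(x) - r_ij is divisible by q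
  but not by p, and L_jk(x) - r_jk by p but not by q; so L_ik(x) - r_ik is divisible by neither,
  which is impossible as x lies in P_ik, Q_ik or R_ik.
\<close>

lemma cong_iff_of_cong_add:
  fixes a a' b r r' s m :: int
  assumes "[a' = a + b] (mod m)" "[r' = r + s] (mod m)" "[b = s] (mod m)"
  shows "[a' = r'] (mod m) \<longleftrightarrow> [a = r] (mod m)"
proof -
  have "[a' = a + s] (mod m)" using assms(1,3) by (metis cong_add_lcancel cong_trans)
  then show ?thesis using assms(2)
    by (metis cong_add_rcancel cong_sym cong_trans)
qed

lemma coset_mod_eq_image:
  assumes "q > 0"
  shows "coset_mod (p * q) q r = (\<lambda>s. r mod int q + int q * int s) ` {..<p}"
proof (intro set_eqI iffI)
  fix y assume "y \<in> coset_mod (p * q) q r"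
  then have y: "0 \<le> y" "y < int q * int p" "y mod int q = r mod int q"
    by (auto simp: coset_mod_def mult.commute)
  have quotient_nonneg: "0 \<le> y div int q"
    using y assms by (simp add: pos_imp_zdiv_nonneg_iff)
  have "int q * (y div int q) < int q * int p"
    using y(2) mult_div_mod_eq[of "int q" y] pos_mod_sign[of "int q" y] assms by linarith
  then have "nat (y div int q) < p"
    using assms quotient_nonneg by simp
  moreover have "y = r mod int q + int q * int (nat (y div int q))"
    using y(3) quotient_nonneg mult_div_mod_eq[of "int q" y] by simp
  ultimately show "y \<in> (\<lambda>s. r mod int q + int q * int s) ` {..<p}"
    by blast
next
  fix y assume "y \<in> (\<lambda>s. r mod int q + int q * int s) ` {..<p}"
  then obtain s where s: "s < p" "y = r mod int q + int q * int s" by auto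
  have "int q * (int s + 1) \<le> int q * int p"
    using s(1) by (intro mult_left_mono) auto
  moreover have "0 \<le> r mod int q" "r mod int q < int q"
    using assms by simp_all
  ultimately have "y < int q * int p"
    using s(2) unfolding distrib_left by linarith
  moreover have "0 \<le> y" "y mod int q = r mod int q"
    using s(2) assms by simp_all
  ultimately show "y \<in> coset_mod (p * q) q r"
    by (simp add: coset_mod_def mult.commute)
qed

lemma card_coset_mod:
  assumes "q > 0"
  shows "card (coset_mod (p * q) q r) = p"
  using assms by (simp add: coset_mod_eq_image card_image inj_on_def)

lemma sum_coset_mod_cong_0:
  assumes "odd p" and "q > 0"
  shows "[\<Sum>(coset_mod (p * q) q r) = 0] (mod int p)"
proof -
  obtain t where t: "p = 2 * t + 1" using assms(1) oddE by blast
  have "2 * (\<Sum>s<p. int s) = 2 * (int p * int t)"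
    using double_gauss_sum[of "p - 1", where 'a = int] t by (simp add: atLeast0AtMost lessThan_Suc_atMost)
  then have "(\<Sum>s<p. int s) = int p * int t" by simp
  then have "\<Sum>(coset_mod (p * q) q r) = int p * (r mod int q + int q * int t)"
    using assms(2) by (simp add: coset_mod_eq_image sum.reindex inj_on_def sum.distrib
        sum_distrib_left[symmetric] algebra_simps flip: sum_distrib_right)
  then show ?thesis by (simp add: cong_0_iff)
qed

lemma coset_mod_cong:
  "y \<in> coset_mod n d r \<Longrightarrow> [y = r] (mod int d)"
  by (simp add: coset_mod_def cong_def)

lemma is_PQR_partition_swap:
  "is_PQR_partition p q m i j P Q R r \<Longrightarrow> is_PQR_partition q p m i j Q P R r"
  unfolding is_PQR_partition_def mult.commute[of p q] add.commute[of p q]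
  by (simp add: Un_ac Int_commute)

lemma PQR_sum_cong:
  assumes "odd p" and "q > 0" and part: "is_PQR_partition p q m i j P Q R r"
  shows "[(\<Sum>x\<in>{0..<p+q}. Ldiff (p * q) m i j x) = int q * r] (mod int p)"
proof -
  define L where "L = Ldiff (p * q) m i j"
  define C where "C = coset_mod (p * q) q r"
  have U: "P \<union> Q \<union> R = {0..<p+q}" and disj: "P \<inter> Q = {}" "P \<inter> R = {}" "Q \<inter> R = {}"
    and R: "card R = 2" "\<forall>x\<in>R. L x = r"
    and P: "card P = p - 1" "L ` P = C - {r}"
    and Q: "card Q = q - 1" "L ` Q = coset_mod (p * q) p r - {r}"
    and r: "0 \<le> r" "r < int (p * q)"
    using part unfolding is_PQR_partition_def L_def C_def by auto
  have fin: "finite P" "finite Q" "finite R"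
    using U by (metis finite_Un finite_atLeastLessThan)+
  have C: "finite C" "card C = p" "r \<in> C"
    unfolding C_def using assms(2) r
    by (simp add: coset_mod_eq_image, simp add: card_coset_mod, simp add: coset_mod_def)
  then have "card (L ` P) = card P"
    using P by simp
  then have "inj_on L P"
    by (rule eq_card_imp_inj_on[OF fin(1)])
  then have "(\<Sum>x\<in>P. L x) = \<Sum>(L ` P)"
    by (simp add: sum.reindex)
  also have "\<dots> = \<Sum>C - r"
    using P(2) C by (simp add: sum_diff1)
  finally have sum_P: "(\<Sum>x\<in>P. L x) = \<Sum>C - r" .
  have sum_Q: "[(\<Sum>x\<in>Q. L x) = (int q - 1) * r] (mod int p)"
  proof -
    have "[(\<Sum>x\<in>Q. L x) = (\<Sum>x\<in>Q. r)] (mod int p)"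
      using Q(2) by (intro cong_sum coset_mod_cong) blast
    then show ?thesis
      using Q(1) assms(2) by (simp add: of_nat_diff)
  qed
  have sum_R: "(\<Sum>x\<in>R. L x) = 2 * r"
    using R by simp
  have "(\<Sum>x\<in>{0..<p+q}. L x) = (\<Sum>x\<in>P. L x) + (\<Sum>x\<in>Q. L x) + (\<Sum>x\<in>R. L x)"
    using fin disj unfolding U[symmetric] by (simp add: sum.union_disjoint Int_Un_distrib2)
  also have "[\<dots> = (0 - r) + (int q - 1) * r + 2 * r] (mod int p)"
    unfolding sum_P sum_R
    using sum_coset_mod_cong_0[OF assms(1,2), of r] sum_Q
    by (intro cong_add cong_diff) (simp_all add: C_def)
  finally show ?thesis
    unfolding L_def by (simp add: algebra_simps)
qed

lemma Ldiff_cocycle: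
  "[Ldiff n m i k x = Ldiff n m i j x + Ldiff n m j k x] (mod int n)"
  unfolding Ldiff_def cong_def by (simp add: mod_add_eq)

lemma PQR_value_cocycle_mod:
  assumes "odd p" and "q > 0" and "coprime p q"
    and ij: "is_PQR_partition p q m i j P1 Q1 R1 r1"
    and jk: "is_PQR_partition p q m j k P2 Q2 R2 r2"
    and ik: "is_PQR_partition p q m i k P3 Q3 R3 r3"
  shows "[r3 = r1 + r2] (mod int p)"
proof -
  let ?S = "\<lambda>a b. \<Sum>x\<in>{0..<p+q}. Ldiff (p * q) m a b x"
  have "[int q * r3 = ?S i k] (mod int p)"
    using PQR_sum_cong[OF assms(1,2) ik] by (rule cong_sym)
  also have "[?S i k = ?S i j + ?S j k] (mod int p)"
    unfolding sum.distrib[symmetric]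
    by (intro cong_sum cong_dvd_modulus[OF Ldiff_cocycle]) simp
  also have "[?S i j + ?S j k = int q * (r1 + r2)] (mod int p)"
    unfolding distrib_left using PQR_sum_cong[OF assms(1,2) ij] PQR_sum_cong[OF assms(1,2) jk]
    by (rule cong_add)
  finally have "[int q * r3 = int q * (r1 + r2)] (mod int p)" .
  moreover have "coprime (int q) (int p)"
    using assms(3) by (simp add: coprime_commute)
  ultimately show ?thesis
    by (simp add: cong_mult_lcancel)
qed

lemma PQR_value_cocycle:
  assumes "odd p" and "odd q" and "coprime p q"
    and ij: "is_PQR_partition p q m i j P1 Q1 R1 r1"
    and jk: "is_PQR_partition p q m j k P2 Q2 R2 r2"
    and ik: "is_PQR_partition p q m i k P3 Q3 R3 r3"
  shows "[r3 = r1 + r2] (mod int (p * q))"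
proof -
  have "[r3 = r1 + r2] (mod int p)"
    using assms(1) odd_pos[OF assms(2)] assms(3) ij jk ik by (rule PQR_value_cocycle_mod)
  moreover have "coprime q p"
    using assms(3) by (simp add: coprime_commute)
  then have "[r3 = r1 + r2] (mod int q)"
    by (rule PQR_value_cocycle_mod[OF assms(2) odd_pos[OF assms(1)] _ is_PQR_partition_swap[OF ij]
          is_PQR_partition_swap[OF jk] is_PQR_partition_swap[OF ik]])
  ultimately show ?thesis
    using assms(3) by (simp add: coprime_cong_mult)
qed

lemma PQR_P_value:
  assumes "coprime p q" and part: "is_PQR_partition p q m i j P Q R r" and "x \<in> P"
  shows "[Ldiff (p * q) m i j x = r] (mod int q)"
    and "\<not> [Ldiff (p * q) m i j x = r] (mod int p)"
proof -
  have "Ldiff (p * q) m i j ` P = coset_mod (p * q) q r - {r}"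
    using part by (simp add: is_PQR_partition_def)
  then have L: "Ldiff (p * q) m i j x \<in> coset_mod (p * q) q r - {r}"
    using assms(3) by blast
  then show q_cong: "[Ldiff (p * q) m i j x = r] (mod int q)"
    using coset_mod_cong by blast
  show "\<not> [Ldiff (p * q) m i j x = r] (mod int p)"
  proof
    assume "[Ldiff (p * q) m i j x = r] (mod int p)"
    then have "[Ldiff (p * q) m i j x = r] (mod int (p * q))"
      using q_cong assms(1) by (simp add: coprime_cong_mult)
    moreover have "0 \<le> r" "r < int (p * q)"
      using part unfolding is_PQR_partition_def by auto
    ultimately show False
      using L by (simp add: cong_def coset_mod_def)
  qed
qed

lemma PQR_Q_value:
  assumes "coprime p q" and "is_PQR_partition p q m i j P Q R r" and "x \<in> Q"
  shows "[Ldiff (p * q) m i j x = r] (mod int p)"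
    and "\<not> [Ldiff (p * q) m i j x = r] (mod int q)"
proof -
  have "coprime q p"
    using assms(1) by (simp add: coprime_commute)
  note swapped = PQR_P_value[OF this is_PQR_partition_swap[OF assms(2)] assms(3)]
  show "[Ldiff (p * q) m i j x = r] (mod int p)"
    unfolding mult.commute[of p q] by (rule swapped(1))
  show "\<not> [Ldiff (p * q) m i j x = r] (mod int q)"
    unfolding mult.commute[of p q] by (rule swapped(2))
qed

lemma PQR_value_cong_either:
  assumes part: "is_PQR_partition p q m i j P Q R r" and "x < p + q"
  shows "[Ldiff (p * q) m i j x = r] (mod int p) \<or> [Ldiff (p * q) m i j x = r] (mod int q)"
proof -
  let ?L = "Ldiff (p * q) m i j"
  have U: "P \<union> Q \<union> R = {0..<p+q}" and R: "\<forall>y\<in>R. ?L y = r"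
    and P: "?L ` P = coset_mod (p * q) q r - {r}" and Q: "?L ` Q = coset_mod (p * q) p r - {r}"
    using part unfolding is_PQR_partition_def by simp_all
  have "x \<in> P \<union> Q \<union> R"
    using U assms(2) by simp
  then consider "x \<in> P" | "x \<in> Q" | "x \<in> R"
    by blast
  then show ?thesis
  proof cases
    case 1
    then have "?L x \<in> coset_mod (p * q) q r"
      using P by blast
    then show ?thesis by (simp add: coset_mod_cong)
  next
    case 2
    then have "?L x \<in> coset_mod (p * q) p r"
      using Q by blast
    then show ?thesis by (simp add: coset_mod_cong)
  next
    case 3
    then show ?thesis using R by simp
  qed
qed

lemma PQR_P_inter_Q_empty:
  assumes "odd p" and "odd q" and coprime: "coprime p q"
    and ij: "is_PQR_partition p q m i j P1 Q1 R1 r1"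
    and jk: "is_PQR_partition p q m j k P2 Q2 R2 r2"
    and ik: "is_PQR_partition p q m i k P3 Q3 R3 r3"
  shows "P1 \<inter> Q2 = {}"
proof (intro equals0I)
  fix x assume "x \<in> P1 \<inter> Q2"
  then have xP: "x \<in> P1" and xQ: "x \<in> Q2"
    by simp_all
  define L where "L = Ldiff (p * q) m"
  have Lx: "[L i k x = L i j x + L j k x] (mod int (p * q))"
    unfolding L_def by (rule Ldiff_cocycle)
  have rs: "[r3 = r1 + r2] (mod int (p * q))"
    using assms by (rule PQR_value_cocycle)
  have mod_p: "[a = b] (mod int p)" and mod_q: "[a = b] (mod int q)"
    if "[a = b] (mod int (p * q))" for a b :: int
    using that by (rule cong_dvd_modulus, simp)+
  have "[L i k x = r3] (mod int p) \<longleftrightarrow> [L i j x = r1] (mod int p)"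
    using mod_p[OF Lx] mod_p[OF rs]
    by (rule cong_iff_of_cong_add) (simp add: L_def PQR_Q_value(1)[OF coprime jk xQ])
  moreover have "[L i k x = r3] (mod int q) \<longleftrightarrow> [L j k x = r2] (mod int q)"
    using mod_q[OF Lx] mod_q[OF rs] unfolding add.commute[of "L i j x"] add.commute[of r1]
    by (rule cong_iff_of_cong_add) (simp add: L_def PQR_P_value(1)[OF coprime ij xP])
  moreover have "P1 \<subseteq> {0..<p+q}"
    using ij unfolding is_PQR_partition_def by (elim conjE) blast
  ultimately show False
    using PQR_value_cong_either[OF ik, of x] PQR_P_value(2)[OF coprime ij xP]
      PQR_Q_value(2)[OF coprime jk xQ] xP
    unfolding L_def by auto
qed

theorem lemma6p6:
  fixes p q :: nat and m :: "nat \<Rightarrow> nat \<Rightarrow> int"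
    and P Q R :: "nat \<Rightarrow> nat \<Rightarrow> nat set" and r :: "nat \<Rightarrow> nat \<Rightarrow> int"
    and i j k :: nat
  assumes "prime p" and "prime q" and "p \<noteq> q"
    and "p \<ge> 5" and "q \<ge> 5"
    and "exp_hadamard (p + q) (p * q) m"
    and "\<forall>a<p+q. \<forall>b<p+q. a \<noteq> b \<longrightarrow>
           is_PQR_partition p q m a b (P a b) (Q a b) (R a b) (r a b)"
    and "i < p + q" and "j < p + q" and "k < p + q"
    and "i \<noteq> j" and "j \<noteq> k" and "i \<noteq> k"
  shows "P i j \<inter> Q j k = {}"
proof (rule PQR_P_inter_Q_empty)
  show "odd p" "odd q"
    using prime_odd_nat[OF assms(1)] prime_odd_nat[OF assms(2)] assms(4,5) by simp_all
  show "coprime p q"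
    using assms(1-3) by (simp add: primes_coprime)
  show "is_PQR_partition p q m i j (P i j) (Q i j) (R i j) (r i j)"
    and "is_PQR_partition p q m j k (P j k) (Q j k) (R j k) (r j k)"
    and "is_PQR_partition p q m i k (P i k) (Q i k) (R i k) (r i k)"
    using assms(7-13) by blast+
qed

end
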